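(* Let $A,B,C\in\mathbb{C}$ with $B\neq C$, and let $A'$ be the reflection of $A$ in the line $BC$. Define points $W_{-1},W_0,\dots,W_5$ by $$W_{-1}=C,\quad W_0=B,\quad W_{k+1}=W_k+\rho^{-1}(W_{k-1}-W_k)\ (k\ge 0).$$ Then $W_0,\dots,W_5$ are the vertices of the regular hexagon on $BC$, in counterclockwise order, and $W_5=C$. Define $T_0=A$ and $T_{k+1}=W_k+\rho\,(T_k-W_k)$ for $k=0,\dots,4$. For $k=1,\dots,5$ let $F_k$ be the triangle with vertices $W_{k-1},T_k,W_k$, with base $W_{k-1}W_k$ and apex $T_k$. Then for every $k=1,\dots,5$, the reflection of the apex $T_k$ in the line $W_{k-1}W_k$ equals $A'$.
   Context: The plane is identified with $\mathbb{C}$, and $\rho=e^{2\pi i/3}$. Geometric meaning of the construction: - For counterclockwise $(A,B,C)$, the hexagon $W_0\cdots W_5$ is the regular hexagon $H_0$ erected outwardly on $BC$. - $F_1$ is the flank triangle at $B$ between $H_0$ and the hexagon erected on $AB$. - Each subsequent $F_{k+1}$ is the flank triangle at $W_k$ between $H_0$ and the regular hexagon erected on the side $W_kT_k$ of $F_k$. - $T_{k+1}$ is the vertex of that hexagon adjacent to $W_k$. *)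

theory Defs
  imports Complex_Main
begin

definition rho :: complex where "rho = cis (2 * pi / 3)"

text \<open>Shifted sequence: Wseq B C n = W_(n-1), so Wseq 0 = W_(-1) = C, Wseq 1 = W_0 = B.\<close>
fun Wseq :: "complex \<Rightarrow> complex \<Rightarrow> nat \<Rightarrow> complex" where
  "Wseq B C 0 = C"
| "Wseq B C (Suc 0) = B"
| "Wseq B C (Suc (Suc n)) =
     Wseq B C (Suc n) + inverse rho * (Wseq B C n - Wseq B C (Suc n))"

definition W :: "complex \<Rightarrow> complex \<Rightarrow> int \<Rightarrow> complex" where
  "W B C k = Wseq B C (nat (k + 1))"

fun T :: "complex \<Rightarrow> complex \<Rightarrow> complex \<Rightarrow> nat \<Rightarrow> complex" where
  "T A B C 0 = A"
| "T A B C (Suc k) = W B C (int k) + rho * (T A B C k - W B C (int k))"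

definition reflect_line :: "complex \<Rightarrow> complex \<Rightarrow> complex \<Rightarrow> complex" where
  "reflect_line P Q z = P + (Q - P) * cnj ((z - P) / (Q - P))"

definition regular_hexagon_ccw :: "(nat \<Rightarrow> complex) \<Rightarrow> bool" where
  "regular_hexagon_ccw P \<longleftrightarrow> P 1 \<noteq> P 0 \<and>
     (\<forall>k<6. P ((k + 1) mod 6) - P k = cis (pi / 3) ^ k * (P 1 - P 0))"

end

theory Submission
  imports Defs
begin

text \<open>With \<open>\<omega> = cis (\<pi>/3)\<close> we have \<open>\<rho> = \<omega>\<^sup>2\<close> and \<open>\<rho>\<^sup>-\<^sup>1 = -\<omega>\<close>, so consecutive sides
  of the hexagon are \<open>W\<^sub>k\<^sub>+\<^sub>1 - W\<^sub>k = \<omega>\<^sup>k\<^sup>+\<^sup>1 (B - C)\<close>, and \<open>\<omega>\<^sup>6 = 1\<close> closes it up.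
  Passing from the flank triangle over \<open>W\<^sub>k\<^sub>-\<^sub>1W\<^sub>k\<close> to the next one rotates the base line
  about \<open>W\<^sub>k\<close> by \<open>\<omega>\<close> and the apex by \<open>\<omega>\<^sup>2\<close>; since a reflection conjugated by a rotation
  through \<open>\<alpha>\<close> is the reflection in the line rotated by \<open>\<alpha>\<close>, the reflected apex does not move.\<close>

abbreviation \<omega> :: complex where "\<omega> \<equiv> cis (pi / 3)"

lemma omega_cube: "\<omega> ^ 3 = -1"
  by (simp add: DeMoivre)

lemma omega_pow_6: "\<omega> ^ 6 = 1"
proof -
  have "\<omega> ^ 6 = (\<omega> ^ 3)\<^sup>2"
    by (simp flip: power_mult)
  then show ?thesis
    by (simp only: omega_cube) simp
qed

lemma rho_eq_omega_sq: "rho = \<omega> ^ 2"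
  by (simp add: rho_def DeMoivre)

lemma inverse_rho: "inverse rho = - \<omega>"
proof (rule inverse_unique)
  show "rho * - \<omega> = 1"
    using omega_cube by (simp add: rho_eq_omega_sq power3_eq_cube power2_eq_square mult.assoc)
qed

lemma sum_omega_powers: "(\<Sum>j<6. \<omega> ^ j) = 0"
proof -
  have "\<omega> \<noteq> 1"
    using omega_cube by auto
  then show ?thesis
    using sum_gp_strict[of \<omega> 6] by (simp only: omega_pow_6 if_False diff_self div_0)
qed

lemma reflect_line_commute: "reflect_line Q P z = reflect_line P Q z"
proof (cases "P = Q")
  case False
  then have base_point: "(z - Q) / (P - Q) = 1 - (z - P) / (Q - P)"
    by (simp add: field_simps)
  show ?thesis
    unfolding reflect_line_def base_point by (simp add: algebra_simps del: complex_cnj_divide)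
qed simp

lemma reflect_line_extend: "reflect_line Q (Q + (Q - P)) z = reflect_line P Q z"
proof (cases "P = Q")
  case False
  then have base_point: "(z - Q) / (Q - P) = (z - P) / (Q - P) - 1"
    by (simp add: field_simps)
  show ?thesis
    unfolding reflect_line_def add_diff_cancel_left' base_point
    by (simp add: algebra_simps del: complex_cnj_divide)
qed simp

lemma reflect_line_rotate:
  assumes "cnj u * u = 1"
  shows "reflect_line Q (Q + u * (R - Q)) (Q + u\<^sup>2 * (z - Q)) = reflect_line Q R z"
proof -
  have "u \<noteq> 0"
    using assms by auto
  then have "u\<^sup>2 * (z - Q) / (u * (R - Q)) = u * ((z - Q) / (R - Q))"
    by (simp add: power2_eq_square)
  then have "u * (R - Q) * cnj (u\<^sup>2 * (z - Q) / (u * (R - Q)))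
             = (cnj u * u) * ((R - Q) * cnj ((z - Q) / (R - Q)))"
    by (simp add: ac_simps)
  then show ?thesis
    unfolding reflect_line_def using assms by simp
qed

lemma reflect_line_flank_step:
  "reflect_line Q (Q + \<omega> * (Q - P)) (Q + rho * (z - Q)) = reflect_line P Q z"
proof -
  have "cnj \<omega> * \<omega> = 1"
    by (simp add: cis_cnj cis_mult)
  from reflect_line_rotate[OF this, of Q "Q + (Q - P)" z]
  have "reflect_line Q (Q + \<omega> * (Q - P)) (Q + rho * (z - Q)) = reflect_line Q (Q + (Q - P)) z"
    by (simp only: add_diff_cancel_left' rho_eq_omega_sq)
  also have "\<dots> = reflect_line P Q z"
    by (rule reflect_line_extend)
  finally show ?thesis .
qed

lemma Wseq_Suc_Suc:
  "Wseq B C (Suc (Suc n)) = Wseq B C (Suc n) + \<omega> * (Wseq B C (Suc n) - Wseq B C n)"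
  by (simp add: inverse_rho algebra_simps)

lemma Wseq_side: "Wseq B C (Suc n) - Wseq B C n = \<omega> ^ n * (B - C)"
proof (induction n)
  case (Suc n)
  then show ?case
    by (simp only: Wseq_Suc_Suc add_diff_cancel_left' power_Suc mult.assoc)
qed simp

lemma Wseq_periodic: "Wseq B C (n + 6) = Wseq B C n"
proof -
  have "Wseq B C (n + 6) - Wseq B C n = (\<Sum>j<6. Wseq B C (n + Suc j) - Wseq B C (n + j))"
    using sum_lessThan_telescope[of "\<lambda>j. Wseq B C (n + j)" 6] by simp
  also have "\<dots> = \<omega> ^ n * (B - C) * (\<Sum>j<6. \<omega> ^ j)"
    by (simp add: Wseq_side sum_distrib_left power_add ac_simps)
  finally show ?thesis
    by (simp add: sum_omega_powers)
qed

lemma W_of_nat: "W B C (int k) = Wseq B C (Suc k)"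
  by (simp add: W_def nat_add_distrib)

lemma W_of_nat_minus_1: "1 \<le> k \<Longrightarrow> W B C (int k - 1) = Wseq B C k"
  by (simp add: W_def)

lemma regular_hexagon_Wseq:
  assumes "B \<noteq> C"
  shows "regular_hexagon_ccw (\<lambda>k. Wseq B C (Suc k))"
  unfolding regular_hexagon_ccw_def
proof (intro conjI allI impI)
  show "Wseq B C (Suc 1) \<noteq> Wseq B C (Suc 0)"
    using Wseq_side[of B C 1] assms by auto
  fix k :: nat
  assume "k < 6"
  then have "Wseq B C (Suc ((k + 1) mod 6)) = Wseq B C (Suc (Suc k))"
    using Wseq_periodic[of B C 1] by (cases "k = 5") auto
  moreover have "Wseq B C (Suc (Suc k)) - Wseq B C (Suc k) = \<omega> ^ k * (\<omega> * (B - C))"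
    by (simp only: Wseq_side power_Suc2 mult.assoc)
  moreover have "Wseq B C (Suc 1) - Wseq B C (Suc 0) = \<omega> * (B - C)"
    using Wseq_side[of B C 1] by simp
  ultimately show "Wseq B C (Suc ((k + 1) mod 6)) - Wseq B C (Suc k)
             = \<omega> ^ k * (Wseq B C (Suc 1) - Wseq B C (Suc 0))"
    by simp
qed

text \<open>Indexing the apex \<open>T\<^sub>n\<close> together with the base \<open>W\<^sub>n\<^sub>-\<^sub>1W\<^sub>n\<close> lets the induction start
  at \<open>n = 0\<close> with the triangle \<open>CBA\<close> itself.\<close>

lemma reflect_line_apex:
  "reflect_line (Wseq B C n) (Wseq B C (Suc n)) (T A B C n) = reflect_line C B A"
proof (induction n)
  case (Suc n)
  have "Wseq B C (Suc (Suc n)) = Wseq B C (Suc n) + \<omega> * (Wseq B C (Suc n) - Wseq B C n)"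
    by (rule Wseq_Suc_Suc)
  moreover have "T A B C (Suc n) = Wseq B C (Suc n) + rho * (T A B C n - Wseq B C (Suc n))"
    by (simp add: W_of_nat)
  ultimately show ?case
    using Suc.IH by (simp add: reflect_line_flank_step)
qed simp

theorem mainTheorem4:
  fixes A B C :: complex
  assumes "B \<noteq> C"
  shows "regular_hexagon_ccw (\<lambda>k. W B C (int k)) \<and> W B C 5 = C \<and>
         (\<forall>k::nat. 1 \<le> k \<and> k \<le> 5 \<longrightarrow>
            reflect_line (W B C (int k - 1)) (W B C (int k)) (T A B C k) = reflect_line B C A)"
proof (intro conjI allI impI)
  show "regular_hexagon_ccw (\<lambda>k. W B C (int k))"
    using regular_hexagon_Wseq[OF assms] by (simp add: W_of_nat)
  show "W B C 5 = C"
    using Wseq_periodic[of B C 0] by (simp add: W_def)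
  fix k :: nat
  assume "1 \<le> k \<and> k \<le> 5"
  then show "reflect_line (W B C (int k - 1)) (W B C (int k)) (T A B C k) = reflect_line B C A"
    using reflect_line_apex[of B C k A]
    by (simp add: W_of_nat W_of_nat_minus_1 reflect_line_commute)
qed

end
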